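(* Let $\mathcal G$ be a collection of subsets of $[n]$ such that the number of sets $C\in\mathcal G$ containing two distinct elements $i,j$ is the same for all $i\ne j$, and let $c_2=|\{C\in\mathcal G:\{1,2\}\subseteq C\}|$. Let $S$ be the sampling with $S=C$ with probability $1/|\mathcal G|$ for each $C\in\mathcal G$, assume its support is $c_1$-uniform, let $\mathbf S=\mathbf I_S$ and $\theta_{\mathbf S}=\frac1{c_1p_S}=\frac{|\mathcal G|}{c_1}$. (i) If $\mathbf W=\mathrm{diag}(w_1,\dots,w_n)\succ0$, then $$\rho\le\max_{i}\Big\{\Big(\frac{|\mathcal G|}{c_1}-1\Big)w_i+\sum_{j\ne i}w_j\Big|\frac{|\mathcal G|c_2}{c_1^2}-1\Big|\Big\}.$$ (ii) If $\mathbf W=\mathbf I$, then $$\rho=\max\Big\{\frac{|\mathcal G|}{c_1}\Big(1+(n-1)\frac{c_2}{c_1}\Big)-n,\ \frac{|\mathcal G|}{c_1}\Big(1-\frac{c_2}{c_1}\Big)\Big\}.$$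
   Context: $c_1$-uniform support: $|\{C\in\mathcal G:i\in C\}|=c_1$ for all $i\in[n]$, with $c_1\ge1$. $\mathbf I_S$ is the column submatrix of the $n\times n$ identity with columns in $S$; $e$ all-ones; $\Pi_{\mathbf S}=\mathbf S(\mathbf S^\top\mathbf W\mathbf S)^\dagger\mathbf S^\top\mathbf W$; $\rho=\lambda_{\max}\big(\mathbf W^{1/2}(\mathbb{E}[\theta_{\mathbf S}^2\Pi_{\mathbf S}ee^\top\Pi_{\mathbf S}^\top]-ee^\top)\mathbf W^{1/2}\big)$. *)

theory Defs
  imports "Jordan_Normal_Form.Matrix" "Jordan_Normal_Form.Char_Poly"
begin

(* Indices are 0-based: [n] is {0..<n}. *)

definition col_select :: "nat \<Rightarrow> nat set \<Rightarrow> real mat" where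
  "col_select n S = mat n (card S) (\<lambda>(i,j). if i = sorted_list_of_set S ! j then 1 else 0)"

definition pinv :: "real mat \<Rightarrow> real mat" where
  "pinv A = (SOME X. X \<in> carrier_mat (dim_col A) (dim_row A) \<and>
      A * X * A = A \<and> X * A * X = X \<and>
      transpose_mat (A * X) = A * X \<and> transpose_mat (X * A) = X * A)"

definition proj_W :: "real mat \<Rightarrow> real mat \<Rightarrow> real mat" where
  "proj_W W S = S * pinv (transpose_mat S * W * S) * transpose_mat S * W"

definition psd :: "real mat \<Rightarrow> bool" where
  "psd A = (A \<in> carrier_mat (dim_row A) (dim_row A) \<and> transpose_mat A = A \<and>
      (\<forall>x \<in> carrier_vec (dim_row A). 0 \<le> x \<bullet> (A *\<^sub>v x)))"

definition mat_sqrt :: "real mat \<Rightarrow> real mat" where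
  "mat_sqrt W = (SOME R. R \<in> carrier_mat (dim_row W) (dim_row W) \<and> psd R \<and> R * R = W)"

definition lambda_max :: "real mat \<Rightarrow> real" where
  "lambda_max A = Max {k. eigenvalue A k}"

definition ones_col :: "nat \<Rightarrow> real mat" where
  "ones_col n = mat n 1 (\<lambda>_. 1)"

(* Expectation is taken entrywise over the uniform distribution on G.
   rho = lambda_max (W^{1/2} (E[theta_S^2 Pi_S e e^T Pi_S^T] - e e^T) W^{1/2}),
   for S = I_C, C uniform over the finite collection G (probability 1/|G|),
   and theta_S = theta (a constant). *)
definition rho :: "nat \<Rightarrow> nat set set \<Rightarrow> real \<Rightarrow> real mat \<Rightarrow> real" where
  "rho n G theta W =
     (let e = ones_col n;
          M = (\<lambda>C. proj_W W (col_select n C) * e * transpose_mat e *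
                  transpose_mat (proj_W W (col_select n C)));
          Ex = mat n n (\<lambda>(i,j). \<Sum>C\<in>G. (1 / real (card G)) * (theta ^ 2 * M C $$ (i,j)))
      in lambda_max (mat_sqrt W * (Ex - e * transpose_mat e) * mat_sqrt W))"

end

theory Submission
  imports Defs
begin

text \<open>
  For a positive diagonal weight \<open>W\<close> the projection \<open>\<Pi>\<^sub>S\<close> of \<open>S = I\<^sub>C\<close> is the coordinate projection
  onto \<open>C\<close>, so \<open>E[\<theta>\<^sup>2 \<Pi>\<^sub>S e e\<^sup>T \<Pi>\<^sub>S\<^sup>T]\<close> has entries \<open>\<theta>\<^sup>2 / |G| \<cdot> #{C \<in> G. i \<in> C \<and> j \<in> C}\<close>. By the
  balance of \<open>G\<close> this count is \<open>c\<^sub>1\<close> on and \<open>c\<^sub>2\<close> off the diagonal, so subtracting \<open>e e\<^sup>T\<close> leaves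
  the matrix \<open>B\<close> with diagonal \<open>p = \<theta> - 1\<close> and off-diagonal entries \<open>q = |G| c\<^sub>2 / c\<^sub>1\<^sup>2 - 1\<close>, and
  \<open>\<rho> = lambda_max (R B R)\<close> for the square root \<open>R\<close> of \<open>W\<close>.

  (i) A nonzero eigenvalue of \<open>R (B R)\<close> is one of \<open>(B R) R = B W\<close>, and Gershgorin's theorem for
  the rows of \<open>B W\<close> gives the bound; the eigenvalue \<open>0\<close> is covered because \<open>p \<ge> 0\<close>.
  (ii) Every square root \<open>R\<close> of \<open>I\<close> is its own inverse, so \<open>\<rho> = lambda_max B\<close>; the eigenvalues of \<open>B\<close>
  are \<open>p - q\<close> (on vectors with coordinate sum zero) and \<open>p - q + n q\<close> (on \<open>e\<close>).
\<close>

subsection \<open>Eigenvalues of real matrices\<close>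

lemma nonzero_vec_has_nonzero_entry:
  assumes "v \<in> carrier_vec n" "v \<noteq> 0\<^sub>v n"
  shows "\<exists>i<n. v $ i \<noteq> 0"
  using assms by (metis carrier_vecD eq_vecI index_zero_vec)

lemma finite_eigenvalues:
  fixes A :: "'a :: field mat"
  assumes A: "A \<in> carrier_mat n n"
  shows "finite {k. eigenvalue A k}"
proof -
  have "char_poly A \<noteq> 0" using degree_monic_char_poly[OF A] by auto
  then have "finite {k. poly (char_poly A) k = 0}" by (rule poly_roots_finite)
  then show ?thesis using eigenvalue_root_char_poly[OF A] by simp
qed

lemma eigenvalue_similar_mat:
  fixes A B :: "'a :: field mat"
  assumes "similar_mat A B"
  shows "eigenvalue A k \<longleftrightarrow> eigenvalue B k"
proof -
  obtain n where "A \<in> carrier_mat n n" "B \<in> carrier_mat n n"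
    using similar_matD[OF assms] by blast
  then show ?thesis
    using char_poly_similar[OF assms] by (simp add: eigenvalue_root_char_poly)
qed

lemma eigenvalue_mult_commute:
  fixes A B :: "'a :: field mat"
  assumes A: "A \<in> carrier_mat n n" and B: "B \<in> carrier_mat n n"
    and ev: "eigenvalue (A * B) k" and k: "k \<noteq> 0"
  shows "eigenvalue (B * A) k"
proof -
  obtain v where v: "v \<in> carrier_vec n" "v \<noteq> 0\<^sub>v n" "(A * B) *\<^sub>v v = k \<cdot>\<^sub>v v"
    using ev A B unfolding eigenvalue_def eigenvector_def by auto
  define u where "u = B *\<^sub>v v"
  have u: "u \<in> carrier_vec n" unfolding u_def using B v by simp
  have Au: "A *\<^sub>v u = k \<cdot>\<^sub>v v" unfolding u_def using A B v by simp
  have "(B * A) *\<^sub>v u = B *\<^sub>v (k \<cdot>\<^sub>v v)" using A B u Au by simp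
  also have "\<dots> = k \<cdot>\<^sub>v u" unfolding u_def using B v by (simp add: mult_mat_vec)
  finally have BAu: "(B * A) *\<^sub>v u = k \<cdot>\<^sub>v u" .
  obtain i where i: "i < n" "v $ i \<noteq> 0" using nonzero_vec_has_nonzero_entry v by blast
  have "u \<noteq> 0\<^sub>v n"
  proof
    assume "u = 0\<^sub>v n"
    then have "(A *\<^sub>v u) $ i = 0" using i A by (simp add: scalar_prod_def)
    moreover have "(A *\<^sub>v u) $ i = k * v $ i" using Au i v by simp
    ultimately show False using k i by simp
  qed
  then show ?thesis using u BAu A B unfolding eigenvalue_def eigenvector_def by auto
qed

lemma eigenvalue_gershgorin:
  fixes A :: "real mat"
  assumes A: "A \<in> carrier_mat n n" and ev: "eigenvalue A lam"
  shows "\<exists>i<n. \<bar>lam - A $$ (i,i)\<bar> \<le> (\<Sum>j\<in>{0..<n}-{i}. \<bar>A $$ (i,j)\<bar>)"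
proof -
  obtain v where v: "v \<in> carrier_vec n" "v \<noteq> 0\<^sub>v n" "A *\<^sub>v v = lam \<cdot>\<^sub>v v"
    using ev A unfolding eigenvalue_def eigenvector_def by auto
  obtain j0 where "j0 < n" "v $ j0 \<noteq> 0" using nonzero_vec_has_nonzero_entry v by blast
  obtain i where i: "i < n" and i_max: "Max ((\<lambda>j. \<bar>v $ j\<bar>) ` {0..<n}) = \<bar>v $ i\<bar>"
    using Max_in[of "(\<lambda>j. \<bar>v $ j\<bar>) ` {0..<n}"] \<open>j0 < n\<close> by fastforce
  have vi_max: "\<bar>v $ j\<bar> \<le> \<bar>v $ i\<bar>" if "j < n" for j
    unfolding i_max[symmetric] using that by (intro Max_ge) auto
  have vi_pos: "0 < \<bar>v $ i\<bar>" using vi_max[OF \<open>j0 < n\<close>] \<open>v $ j0 \<noteq> 0\<close> by linarith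
  have "lam * v $ i = (\<Sum>j\<in>{0..<n}. A $$ (i,j) * v $ j)"
    using arg_cong[OF v(3), of "\<lambda>x. x $ i"] i A v(1) by (simp add: scalar_prod_def)
  also have "\<dots> = A $$ (i,i) * v $ i + (\<Sum>j\<in>{0..<n}-{i}. A $$ (i,j) * v $ j)"
    using i by (simp add: sum.remove)
  finally have "\<bar>lam - A $$ (i,i)\<bar> * \<bar>v $ i\<bar> = \<bar>\<Sum>j\<in>{0..<n}-{i}. A $$ (i,j) * v $ j\<bar>"
    by (simp add: abs_mult[symmetric] left_diff_distrib)
  also have "\<dots> \<le> (\<Sum>j\<in>{0..<n}-{i}. \<bar>A $$ (i,j)\<bar> * \<bar>v $ i\<bar>)"
    using vi_max by (intro order_trans[OF sum_abs] sum_mono) (auto simp: abs_mult mult_left_mono)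
  finally have "\<bar>lam - A $$ (i,i)\<bar> * \<bar>v $ i\<bar> \<le> (\<Sum>j\<in>{0..<n}-{i}. \<bar>A $$ (i,j)\<bar>) * \<bar>v $ i\<bar>"
    by (simp add: sum_distrib_right)
  then show ?thesis using i vi_pos by (meson mult_le_cancel_right_pos)
qed

lemma cnj_real_symmetric_quadratic_form:
  fixes A :: "real mat" and v :: "complex vec"
  assumes A: "A \<in> carrier_mat n n" and sym: "transpose_mat A = A"
  shows "cnj (\<Sum>i<n. \<Sum>j<n. cnj (v $ i) * of_real (A $$ (i,j)) * v $ j)
    = (\<Sum>i<n. \<Sum>j<n. cnj (v $ i) * of_real (A $$ (i,j)) * v $ j)"
proof -
  let ?q = "\<Sum>i<n. \<Sum>j<n. cnj (v $ i) * of_real (A $$ (i,j)) * v $ j"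
  have A_sym: "A $$ (i,j) = A $$ (j,i)" if "i < n" "j < n" for i j
    using sym that A by (metis carrier_matD index_transpose_mat(1))
  have "cnj ?q = (\<Sum>i<n. \<Sum>j<n. v $ i * of_real (A $$ (i,j)) * cnj (v $ j))"
    by simp
  also have "\<dots> = (\<Sum>j<n. \<Sum>i<n. v $ i * of_real (A $$ (i,j)) * cnj (v $ j))"
    by (rule sum.swap)
  also have "\<dots> = ?q" using A_sym by (auto intro!: sum.cong simp: mult.commute mult.left_commute)
  finally show ?thesis .
qed

lemma real_symmetric_eigenvalue_exists:
  fixes A :: "real mat"
  assumes A: "A \<in> carrier_mat n n" and n: "0 < n" and sym: "transpose_mat A = A"
  shows "\<exists>k. eigenvalue A k"
proof -
  define Ac where "Ac = map_mat complex_of_real A"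
  have Ac: "Ac \<in> carrier_mat n n" using A unfolding Ac_def by auto
  have cp: "char_poly Ac = map_poly of_real (char_poly A)"
    unfolding Ac_def by (rule of_real_hom.char_poly_hom[OF A])
  have "degree (char_poly Ac) = n" unfolding cp using degree_monic_char_poly[OF A] by simp
  then obtain z where z: "poly (char_poly Ac) z = 0"
    using fundamental_theorem_of_algebra n by (metis constant_degree not_gr0)
  then obtain v where v: "v \<in> carrier_vec n" "v \<noteq> 0\<^sub>v n" "Ac *\<^sub>v v = z \<cdot>\<^sub>v v"
    using eigenvalue_root_char_poly[OF Ac] Ac unfolding eigenvalue_def eigenvector_def by auto
  have row: "(\<Sum>j<n. of_real (A $$ (i,j)) * v $ j) = z * v $ i" if "i < n" for i
    using arg_cong[OF v(3), of "\<lambda>x. x $ i"] that Ac v(1) A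
    unfolding Ac_def by (auto simp: scalar_prod_def lessThan_atLeast0)
  define N where "N = (\<Sum>i<n. (cmod (v $ i))\<^sup>2)"
  define q where "q = (\<Sum>i<n. \<Sum>j<n. cnj (v $ i) * of_real (A $$ (i,j)) * v $ j)"
  have "q \<in> \<real>"
    unfolding Reals_cnj_iff q_def by (rule cnj_real_symmetric_quadratic_form[OF A sym])
  have "q = (\<Sum>i<n. cnj (v $ i) * (z * v $ i))"
    unfolding q_def by (intro sum.cong refl) (simp add: row sum_distrib_left[symmetric] mult.assoc)
  also have "\<dots> = z * of_real N"
    unfolding N_def of_real_sum sum_distrib_left
    by (intro sum.cong refl) (simp only: complex_norm_square mult_ac)
  finally have "Im z * N = 0" using \<open>q \<in> \<real>\<close> by (simp add: complex_is_Real_iff)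
  moreover have "0 < N"
  proof -
    obtain i where "i < n" "v $ i \<noteq> 0" using nonzero_vec_has_nonzero_entry[OF v(1,2)] by blast
    then show ?thesis unfolding N_def by (intro sum_pos2[of _ i]) auto
  qed
  ultimately have "z = of_real (Re z)" by (simp add: complex_eq_iff)
  then have "of_real (poly (char_poly A) (Re z)) = (0::complex)"
    using z unfolding cp by (metis of_real_hom.poly_map_poly)
  then show ?thesis using eigenvalue_root_char_poly[OF A] by auto
qed

lemma lambda_max_le:
  fixes A :: "real mat"
  assumes A: "A \<in> carrier_mat n n" and n: "0 < n" and sym: "transpose_mat A = A"
    and bound: "\<And>k. eigenvalue A k \<Longrightarrow> k \<le> b"
  shows "lambda_max A \<le> b"
  unfolding lambda_max_def
  using finite_eigenvalues[OF A] real_symmetric_eigenvalue_exists[OF A n sym] bound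
  by (intro Max.boundedI) auto

lemma lambda_max_similar_mat:
  assumes "similar_mat A B"
  shows "lambda_max A = lambda_max B"
proof -
  have "eigenvalue A = eigenvalue B" using eigenvalue_similar_mat[OF assms] by blast
  then show ?thesis unfolding lambda_max_def by simp
qed

subsection \<open>Matrices with constant diagonal and constant off-diagonal\<close>

definition diag_offdiag_mat :: "nat \<Rightarrow> 'a \<Rightarrow> 'a \<Rightarrow> 'a :: zero mat" where
  "diag_offdiag_mat n p q = mat n n (\<lambda>(i,j). if i = j then p else q)"

lemma diag_offdiag_mat_carrier: "diag_offdiag_mat n p q \<in> carrier_mat n n"
  unfolding diag_offdiag_mat_def by simp

lemma transpose_diag_offdiag_mat: "transpose_mat (diag_offdiag_mat n p q) = diag_offdiag_mat n p q"
  unfolding diag_offdiag_mat_def by auto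

lemma diag_offdiag_mat_mult_vec:
  fixes p q :: "'a :: comm_ring_1"
  assumes v: "v \<in> carrier_vec n" and i: "i < n"
  shows "(diag_offdiag_mat n p q *\<^sub>v v) $ i = (p - q) * v $ i + q * (\<Sum>j\<in>{0..<n}. v $ j)"
proof -
  have "(diag_offdiag_mat n p q *\<^sub>v v) $ i = (\<Sum>j\<in>{0..<n}. (if i = j then (p - q) * v $ j else 0) + q * v $ j)"
    using v i unfolding diag_offdiag_mat_def by (auto simp: scalar_prod_def algebra_simps intro!: sum.cong)
  also have "\<dots> = (p - q) * v $ i + q * (\<Sum>j\<in>{0..<n}. v $ j)"
    using i by (simp add: sum.distrib sum_distrib_left)
  finally show ?thesis .
qed

lemma eigenvalue_diag_offdiag_matD:
  fixes p q :: "'a :: field"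
  assumes "eigenvalue (diag_offdiag_mat n p q) k"
  shows "k = p - q \<or> k = p - q + of_nat n * q"
proof -
  obtain v where v: "v \<in> carrier_vec n" "v \<noteq> 0\<^sub>v n"
    "diag_offdiag_mat n p q *\<^sub>v v = k \<cdot>\<^sub>v v"
    using assms carrier_matD[OF diag_offdiag_mat_carrier[of n p q]] unfolding eigenvalue_def eigenvector_def by auto
  define s where "s = (\<Sum>j\<in>{0..<n}. v $ j)"
  have row: "(p - q) * v $ i + q * s = k * v $ i" if "i < n" for i
    using diag_offdiag_mat_mult_vec[OF v(1) that, of p q] arg_cong[OF v(3), of "\<lambda>x. x $ i"] v(1) that
    unfolding s_def by simp
  show ?thesis
  proof (cases "s = 0")
    case True
    obtain i where "i < n" "v $ i \<noteq> 0" using nonzero_vec_has_nonzero_entry[OF v(1,2)] by blast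
    then show ?thesis using row[of i] True by simp
  next
    case False
    have "k * s = (\<Sum>i\<in>{0..<n}. k * v $ i)" unfolding s_def by (rule sum_distrib_left)
    also have "\<dots> = (\<Sum>i\<in>{0..<n}. (p - q) * v $ i + q * s)" by (simp add: row)
    also have "\<dots> = ((p - q) + of_nat n * q) * s"
      unfolding sum.distrib sum_distrib_left[symmetric] s_def[symmetric] by (simp add: algebra_simps)
    finally have "((p - q) + of_nat n * q) * s = k * s" ..
    then show ?thesis using False by simp
  qed
qed

lemma eigenvalues_diag_offdiag_mat:
  fixes p q :: "'a :: field"
  assumes n: "2 \<le> n"
  shows "{k. eigenvalue (diag_offdiag_mat n p q) k} = {p - q, p - q + of_nat n * q}"
proof -
  let ?B = "diag_offdiag_mat n p q"
  have B: "?B \<in> carrier_mat n n" by (rule diag_offdiag_mat_carrier)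
  have eigenvalue_if_eigenvector: "eigenvalue ?B k"
    if v: "v \<in> carrier_vec n" "v $ 0 \<noteq> 0" and row: "\<And>i. i < n \<Longrightarrow> (?B *\<^sub>v v) $ i = k * v $ i"
    for v k
  proof -
    have "v \<noteq> 0\<^sub>v n" using v n by auto
    moreover have "?B *\<^sub>v v = k \<cdot>\<^sub>v v" using v B row by (intro eq_vecI) auto
    ultimately show ?thesis using v B unfolding eigenvalue_def eigenvector_def by auto
  qed
  have "eigenvalue ?B (p - q)"
  proof (rule eigenvalue_if_eigenvector)
    let ?v = "vec n (\<lambda>i. if i = 0 then 1 else if i = 1 then -1 else 0) :: 'a vec"
    have "(\<Sum>j\<in>{0..<n}. ?v $ j) = (\<Sum>j\<in>{0..<n}. (if j = 0 then 1 else 0) + (if j = 1 then -1 else 0))"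
      by (intro sum.cong) auto
    also have "\<dots> = 0" using n by (simp add: sum.distrib)
    finally show "(?B *\<^sub>v ?v) $ i = (p - q) * ?v $ i" if "i < n" for i
      using diag_offdiag_mat_mult_vec[of ?v n i p q] that by simp
  qed (use n in auto)
  moreover have "eigenvalue ?B (p - q + of_nat n * q)"
  proof (rule eigenvalue_if_eigenvector)
    let ?v = "vec n (\<lambda>i. 1) :: 'a vec"
    show "(?B *\<^sub>v ?v) $ i = (p - q + of_nat n * q) * ?v $ i" if "i < n" for i
      using diag_offdiag_mat_mult_vec[of ?v n i p q] that by (simp add: algebra_simps)
  qed (use n in auto)
  ultimately show ?thesis using eigenvalue_diag_offdiag_matD by blast
qed

lemma lambda_max_diag_offdiag_mat:
  fixes p q :: real
  assumes "2 \<le> n"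
  shows "lambda_max (diag_offdiag_mat n p q) = max (p - q + real n * q) (p - q)"
  unfolding lambda_max_def eigenvalues_diag_offdiag_mat[OF assms] by (simp add: max.commute)

subsection \<open>Column selections and weighted projections\<close>

lemma dim_mat_diag [simp]: "dim_row (mat_diag n f) = n" "dim_col (mat_diag n f) = n"
  by (simp_all add: mat_diag_def)

lemma transpose_mat_diag [simp]: "transpose_mat (mat_diag n f) = mat_diag n f"
  by (rule eq_matI) (auto simp: mat_diag_def)

lemma col_select_carrier: "col_select n C \<in> carrier_mat n (card C)"
  unfolding col_select_def by auto

lemma col_select_index:
  "i < n \<Longrightarrow> k < card C \<Longrightarrow> col_select n C $$ (i,k) = (if i = sorted_list_of_set C ! k then 1 else 0)"
  unfolding col_select_def by auto

lemma transpose_col_select_mult_mat_diag: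
  assumes C: "C \<subseteq> {0..<n}"
  shows "transpose_mat (col_select n C) * mat_diag n w * col_select n C
    = mat_diag (card C) (\<lambda>k. w (sorted_list_of_set C ! k))"
proof -
  let ?s = "sorted_list_of_set C" and ?S = "col_select n C"
  have fin: "finite C" using C finite_subset by blast
  have s: "distinct ?s" "length ?s = card C" "set ?s = C" using fin by auto
  have s_lt: "?s ! k < n" if "k < card C" for k using s that C nth_mem by fastforce
  have S: "?S \<in> carrier_mat n (card C)" by (rule col_select_carrier)
  have "(transpose_mat ?S * mat_diag n w * ?S) $$ (k,l) = (if k = l then w (?s ! k) else 0)"
    if k: "k < card C" and l: "l < card C" for k l
  proof -
    have "(transpose_mat ?S * mat_diag n w * ?S) $$ (k,l)
        = (\<Sum>i\<in>{0..<n}. (if i = ?s ! k then 1 else 0) * w i * (if i = ?s ! l then 1 else 0))"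
      using k l S by (auto simp: mat_diag_mult_right[of _ "card C"] scalar_prod_def col_select_index
          intro!: sum.cong)
    also have "\<dots> = (if k = l then w (?s ! k) else 0)"
      using s_lt[OF k] s_lt[OF l] nth_eq_iff_index_eq[OF s(1), of k l] k l s(2)
      by (auto simp: if_distrib cong: if_cong)
    finally show ?thesis .
  qed
  then show ?thesis using S by (intro eq_matI) (auto simp: mat_diag_def)
qed

lemma col_select_mult_mat_diag_transpose:
  assumes C: "C \<subseteq> {0..<n}"
  shows "col_select n C * mat_diag (card C) (\<lambda>k. d (sorted_list_of_set C ! k)) * transpose_mat (col_select n C)
    = mat_diag n (\<lambda>i. if i \<in> C then d i else 0)"
proof -
  let ?s = "sorted_list_of_set C" and ?S = "col_select n C"
  have fin: "finite C" using C finite_subset by blast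
  have s: "distinct ?s" "length ?s = card C" "set ?s = C" using fin by auto
  have S: "?S \<in> carrier_mat n (card C)" by (rule col_select_carrier)
  have "(?S * mat_diag (card C) (\<lambda>k. d (?s ! k)) * transpose_mat ?S) $$ (i,j)
      = (if i = j \<and> i \<in> C then d i else 0)" if i: "i < n" and j: "j < n" for i j
  proof -
    let ?f = "\<lambda>c. (if i = c then 1 else 0) * d c * (if j = c then 1 else 0)"
    have "(?S * mat_diag (card C) (\<lambda>k. d (?s ! k)) * transpose_mat ?S) $$ (i,j)
        = (\<Sum>k<length ?s. ?f (?s ! k))"
      using i j S s(2) by (auto simp: mat_diag_mult_right[of _ n] scalar_prod_def col_select_index lessThan_atLeast0
          intro!: sum.cong)
    also have "\<dots> = (\<Sum>c\<in>C. ?f c)"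
      by (rule sum.reindex_bij_betw[OF bij_betw_nth[OF s(1) refl s(3)[symmetric]]])
    also have "\<dots> = (if i = j \<and> i \<in> C then d i else 0)"
      using fin by (auto simp: if_distrib cong: if_cong)
    finally show ?thesis .
  qed
  then show ?thesis using S by (intro eq_matI) (auto simp: mat_diag_def)
qed

lemma pinv_eq_inverse:
  fixes A X :: "real mat"
  assumes A: "A \<in> carrier_mat n n" and X: "X \<in> carrier_mat n n"
    and AX: "A * X = 1\<^sub>m n" and XA: "X * A = 1\<^sub>m n"
  shows "pinv A = X"
proof -
  have "X \<in> carrier_mat (dim_col A) (dim_row A) \<and> A * X * A = A \<and> X * A * X = X \<and>
      transpose_mat (A * X) = A * X \<and> transpose_mat (X * A) = X * A"
    using A X AX XA by auto
  then have P: "pinv A \<in> carrier_mat n n" "A * pinv A * A = A"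
    unfolding pinv_def using A by (metis (mono_tags, lifting) someI_ex carrier_matD)+
  have "pinv A = (X * A) * pinv A * (A * X)" using P(1) AX XA by simp
  also have "\<dots> = X * (A * pinv A * A) * X"
    using A X P(1) by (simp add: assoc_mult_mat[of _ n n _ n _ n] mult_carrier_mat[of _ n n _ n])
  also have "\<dots> = X" using P(2) A X XA by simp
  finally show ?thesis .
qed

lemma pinv_mat_diag:
  assumes "\<forall>k<m. d k \<noteq> (0::real)"
  shows "pinv (mat_diag m d) = mat_diag m (\<lambda>k. 1 / d k)"
proof -
  have "mat_diag m (\<lambda>k. d k * (1 / d k)) = 1\<^sub>m m" "mat_diag m (\<lambda>k. 1 / d k * d k) = 1\<^sub>m m"
    using assms by (auto intro!: eq_matI simp: mat_diag_def)
  then show ?thesis by (intro pinv_eq_inverse[of _ m]) simp_all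
qed

lemma proj_W_mat_diag_col_select:
  assumes C: "C \<subseteq> {0..<n}" and w: "\<forall>i\<in>C. w i \<noteq> 0"
  shows "proj_W (mat_diag n w) (col_select n C) = mat_diag n (\<lambda>i. if i \<in> C then 1 else 0)"
proof -
  let ?s = "sorted_list_of_set C"
  have "?s ! k \<in> C" if "k < card C" for k
    using that C finite_subset[OF C] by (metis finite_atLeastLessThan length_sorted_list_of_set nth_mem set_sorted_list_of_set)
  then have "pinv (transpose_mat (col_select n C) * mat_diag n w * col_select n C)
      = mat_diag (card C) (\<lambda>k. 1 / w (?s ! k))"
    unfolding transpose_col_select_mult_mat_diag[OF C] using w by (intro pinv_mat_diag) blast
  then have "proj_W (mat_diag n w) (col_select n C)
      = mat_diag n (\<lambda>i. if i \<in> C then 1 / w i else 0) * mat_diag n w"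
    unfolding proj_W_def using col_select_mult_mat_diag_transpose[OF C, of "\<lambda>i. 1 / w i"] by simp
  then show ?thesis using w by (auto intro!: arg_cong[where f = "mat_diag n"])
qed

lemma mat_diag_outer_ones:
  "mat_diag n f * ones_col n * transpose_mat (ones_col n) * transpose_mat (mat_diag n f)
    = mat n n (\<lambda>(i,j). f i * (f j :: real))"
proof -
  have e: "ones_col n \<in> carrier_mat n 1" unfolding ones_col_def by auto
  have "mat_diag n f * ones_col n * transpose_mat (ones_col n) = mat n n (\<lambda>(i,j). f i)"
    by (subst mat_diag_mult_left[OF e]) (auto intro!: eq_matI simp: ones_col_def scalar_prod_def)
  then show ?thesis by (auto simp: mat_diag_mult_right[of _ n] intro!: eq_matI)
qed

lemma psd_mat_diag:
  assumes "\<forall>i<n. 0 \<le> d i"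
  shows "psd (mat_diag n d)"
proof -
  have "x \<bullet> (mat_diag n d *\<^sub>v x) = (\<Sum>i\<in>{0..<n}. d i * (x $ i)\<^sup>2)" if "x \<in> carrier_vec n" for x
    using that by (auto simp: scalar_prod_def mat_diag_def power2_eq_square if_distrib if_distribR
        cong: if_cong intro!: sum.cong)
  then show ?thesis using assms unfolding psd_def by (auto intro!: sum_nonneg)
qed

lemma mat_sqrt_mat_diag:
  assumes w: "\<forall>i<n. 0 \<le> w i"
  shows "mat_sqrt (mat_diag n w) \<in> carrier_mat n n" "psd (mat_sqrt (mat_diag n w))"
    "mat_sqrt (mat_diag n w) * mat_sqrt (mat_diag n w) = mat_diag n w"
proof -
  let ?R = "mat_diag n (\<lambda>i. sqrt (w i))"
  have "psd ?R" using w by (intro psd_mat_diag) auto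
  moreover have "?R * ?R = mat_diag n w"
    unfolding mat_diag_diag using w by (auto intro!: eq_matI simp: mat_diag_def)
  ultimately have "?R \<in> carrier_mat n n \<and> psd ?R \<and> ?R * ?R = mat_diag n w" by simp
  then have "\<exists>R. R \<in> carrier_mat n n \<and> psd R \<and> R * R = mat_diag n w" by blast
  from someI_ex[OF this] show "mat_sqrt (mat_diag n w) \<in> carrier_mat n n" "psd (mat_sqrt (mat_diag n w))"
    "mat_sqrt (mat_diag n w) * mat_sqrt (mat_diag n w) = mat_diag n w"
    unfolding mat_sqrt_def by auto
qed

lemma lambda_max_mat_sqrt_one:
  assumes A: "A \<in> carrier_mat n n"
  shows "lambda_max (mat_sqrt (1\<^sub>m n) * A * mat_sqrt (1\<^sub>m n)) = lambda_max A"
proof (rule lambda_max_similar_mat)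
  let ?R = "mat_sqrt (1\<^sub>m n)"
  have "?R \<in> carrier_mat n n" "?R * ?R = 1\<^sub>m n"
    using mat_sqrt_mat_diag[of n "\<lambda>_. 1"] by simp_all
  then show "similar_mat (?R * A * ?R) A"
    using A by (intro similar_matI[where n = n]) auto
qed

lemma lambda_max_sqrt_diag_offdiag_le:
  assumes n: "0 < n" and p: "0 \<le> p" and w: "\<forall>i<n. 0 \<le> w i"
  shows "lambda_max (mat_sqrt (mat_diag n w) * diag_offdiag_mat n p q * mat_sqrt (mat_diag n w))
    \<le> Max ((\<lambda>i. p * w i + (\<Sum>j\<in>{0..<n} - {i}. w j) * \<bar>q\<bar>) ` {0..<n})"
    (is "lambda_max (?R * ?B * ?R) \<le> Max (?f ` _)")
proof (rule lambda_max_le)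
  have R: "?R \<in> carrier_mat n n" "transpose_mat ?R = ?R" "?R * ?R = mat_diag n w"
    using mat_sqrt_mat_diag[OF w] unfolding psd_def by auto
  have B: "?B \<in> carrier_mat n n" by (rule diag_offdiag_mat_carrier)
  show "?R * ?B * ?R \<in> carrier_mat n n" using R B by simp
  show "transpose_mat (?R * ?B * ?R) = ?R * ?B * ?R"
    using R B
    by (subst transpose_mult[of _ n n _ n], simp, simp, subst transpose_mult[of _ n n _ n])
      (auto simp: transpose_diag_offdiag_mat)
  have f_le_Max: "?f i \<le> Max (?f ` {0..<n})" if "i < n" for i using that by simp
  fix lam assume ev: "eigenvalue (?R * ?B * ?R) lam"
  show "lam \<le> Max (?f ` {0..<n})"
  proof (cases "lam = 0")
    case True
    have "0 \<le> ?f 0" using p w n by (auto intro!: sum_nonneg add_nonneg_nonneg mult_nonneg_nonneg)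
    then show ?thesis using True f_le_Max[OF n] by simp
  next
    case False
    have "eigenvalue (?R * (?B * ?R)) lam" using ev assoc_mult_mat[OF R(1) B R(1)] by simp
    then have "eigenvalue ((?B * ?R) * ?R) lam"
      by (rule eigenvalue_mult_commute[OF R(1) mult_carrier_mat[OF B R(1)] _ False])
    then have "eigenvalue (?B * mat_diag n w) lam" using assoc_mult_mat[OF B R(1) R(1)] R(3) by simp
    then obtain i where i: "i < n"
      and "\<bar>lam - (?B * mat_diag n w) $$ (i,i)\<bar> \<le> (\<Sum>j\<in>{0..<n}-{i}. \<bar>(?B * mat_diag n w) $$ (i,j)\<bar>)"
      using eigenvalue_gershgorin[OF mult_carrier_mat[OF B mat_diag_dim]] by blast
    then have "\<bar>lam - p * w i\<bar> \<le> \<bar>q\<bar> * (\<Sum>j\<in>{0..<n}-{i}. w j)"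
      using B w by (simp add: mat_diag_mult_right[of _ n] diag_offdiag_mat_def abs_mult sum_distrib_left)
    then have "lam \<le> ?f i" by (simp add: abs_le_iff mult.commute)
    then show ?thesis using f_le_Max[OF i] by linarith
  qed
qed (use n in simp)

subsection \<open>The constant \<open>\<rho>\<close> for diagonal weights\<close>

lemma rho_mat_diag:
  assumes finG: "finite G" and sub: "\<forall>C\<in>G. C \<subseteq> {0..<n}" and w: "\<forall>i<n. 0 < w i"
  shows "rho n G \<theta> (mat_diag n w) = lambda_max (mat_sqrt (mat_diag n w) *
     mat n n (\<lambda>(i,j). \<theta>\<^sup>2 / real (card G) * real (card {C\<in>G. i \<in> C \<and> j \<in> C}) - 1) *
     mat_sqrt (mat_diag n w))"
proof -
  let ?e = "ones_col n"
  let ?M = "\<lambda>C. proj_W (mat_diag n w) (col_select n C) * ?e * transpose_mat ?e *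
    transpose_mat (proj_W (mat_diag n w) (col_select n C))"
  have M: "?M C $$ (i,j) = (if i \<in> C then 1 else 0) * (if j \<in> C then 1 else 0)"
    if "C \<in> G" "i < n" "j < n" for C i j
    using that sub w proj_W_mat_diag_col_select[of C n w] mat_diag_outer_ones by fastforce
  have "(\<Sum>C\<in>G. 1 / real (card G) * (\<theta>\<^sup>2 * ?M C $$ (i,j)))
      = \<theta>\<^sup>2 / real (card G) * real (card {C\<in>G. i \<in> C \<and> j \<in> C})" if "i < n" "j < n" for i j
  proof -
    have "(\<Sum>C\<in>G. 1 / real (card G) * (\<theta>\<^sup>2 * ?M C $$ (i,j)))
        = \<theta>\<^sup>2 / real (card G) * (\<Sum>C\<in>G. if i \<in> C \<and> j \<in> C then 1 else 0)"
      using that M by (auto simp: sum_distrib_left intro!: sum.cong)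
    also have "(\<Sum>C\<in>G. if i \<in> C \<and> j \<in> C then 1 else 0) = real (card {C\<in>G. i \<in> C \<and> j \<in> C})"
      using finG by (simp add: sum.inter_filter[symmetric])
    finally show ?thesis .
  qed
  then have "mat n n (\<lambda>(i,j). \<Sum>C\<in>G. 1 / real (card G) * (\<theta>\<^sup>2 * ?M C $$ (i,j))) - ?e * transpose_mat ?e
      = mat n n (\<lambda>(i,j). \<theta>\<^sup>2 / real (card G) * real (card {C\<in>G. i \<in> C \<and> j \<in> C}) - 1)"
    by (auto intro!: eq_matI simp: ones_col_def scalar_prod_def)
  then show ?thesis unfolding rho_def Let_def by simp
qed

lemma rho_mat_diag_pair_balanced:
  assumes finG: "finite G" and sub: "\<forall>C\<in>G. C \<subseteq> {0..<n}" and w: "\<forall>i<n. 0 < w i"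
    and counts: "\<And>i j. i < n \<Longrightarrow> j < n \<Longrightarrow> card {C\<in>G. i \<in> C \<and> j \<in> C} = (if i = j then c1 else c2)"
  shows "rho n G (real (card G) / real c1) (mat_diag n w) = lambda_max (mat_sqrt (mat_diag n w) *
     diag_offdiag_mat n (real (card G) / real c1 - 1) (real (card G) * real c2 / (real c1)\<^sup>2 - 1) *
     mat_sqrt (mat_diag n w))"
proof -
  have "(real (card G) / real c1)\<^sup>2 / real (card G) * real c = real (card G) * real c / (real c1)\<^sup>2" for c
    by (cases "card G = 0") (simp_all add: power2_eq_square)
  then have "mat n n (\<lambda>(i,j). (real (card G) / real c1)\<^sup>2 / real (card G) * real (card {C\<in>G. i \<in> C \<and> j \<in> C}) - 1)
      = diag_offdiag_mat n (real (card G) / real c1 - 1) (real (card G) * real c2 / (real c1)\<^sup>2 - 1)"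
    unfolding diag_offdiag_mat_def by (auto intro!: eq_matI simp: counts power2_eq_square)
  then show ?thesis using rho_mat_diag[OF finG sub w] by simp
qed

theorem theorem4p19:
  fixes n c1 :: nat and G :: "nat set set" and w :: "nat \<Rightarrow> real"
  assumes n2: "2 \<le> n"
    and G_sub: "\<forall>C\<in>G. C \<subseteq> {0..<n}"
    and pair_const: "\<forall>i<n. \<forall>j<n. \<forall>k<n. \<forall>l<n. i \<noteq> j \<longrightarrow> k \<noteq> l \<longrightarrow>
        card {C\<in>G. i \<in> C \<and> j \<in> C} = card {C\<in>G. k \<in> C \<and> l \<in> C}"
    and c1_pos: "1 \<le> c1"
    and uniform: "\<forall>i<n. card {C\<in>G. i \<in> C} = c1"
  defines "c2 \<equiv> card {C\<in>G. {0, 1} \<subseteq> C}"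
    and "\<theta> \<equiv> real (card G) / real c1"
  shows "((\<forall>i<n. 0 < w i) \<longrightarrow>
           rho n G \<theta> (mat_diag n w) \<le>
           Max ((\<lambda>i. (real (card G) / real c1 - 1) * w i +
                 (\<Sum>j\<in>{0..<n} - {i}. w j) *
                   \<bar>real (card G) * real c2 / (real c1)^2 - 1\<bar>) ` {0..<n}))
       \<and> rho n G \<theta> (1\<^sub>m n) =
           max (real (card G) / real c1 * (1 + (real n - 1) * real c2 / real c1) - real n)
               (real (card G) / real c1 * (1 - real c2 / real c1))"
proof -
  have finG: "finite G" using G_sub by (intro finite_subset[of G "Pow {0..<n}"]) auto
  have "{C\<in>G. {0, 1} \<subseteq> C} = {C\<in>G. 0 \<in> C \<and> 1 \<in> C}" by auto
  then have "card {C\<in>G. i \<in> C \<and> j \<in> C} = c2" if "i < n" "j < n" "i \<noteq> j" for i j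
    using pair_const[rule_format, of i j 0 1] that n2 unfolding c2_def by simp
  then have counts: "card {C\<in>G. i \<in> C \<and> j \<in> C} = (if i = j then c1 else c2)"
    if "i < n" "j < n" for i j
    using that uniform by simp
  have "c1 \<le> card G" using uniform n2 finG card_mono[of G "{C\<in>G. 0 \<in> C}"] by auto
  then have p_nonneg: "0 \<le> real (card G) / real c1 - 1" using c1_pos by simp
  note rho_eq = rho_mat_diag_pair_balanced[OF finG G_sub _ counts, folded \<theta>_def]
  let ?q = "real (card G) * real c2 / (real c1)\<^sup>2 - 1"
  have "rho n G \<theta> (1\<^sub>m n) = lambda_max (diag_offdiag_mat n (\<theta> - 1) ?q)"
    using rho_eq[of "\<lambda>_. 1"] lambda_max_mat_sqrt_one[OF diag_offdiag_mat_carrier] by (simp add: \<theta>_def)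
  also have "\<dots> = max (\<theta> - 1 - ?q + real n * ?q) (\<theta> - 1 - ?q)"
    by (rule lambda_max_diag_offdiag_mat[OF n2])
  also have "\<theta> - 1 - ?q + real n * ?q
      = real (card G) / real c1 * (1 + (real n - 1) * real c2 / real c1) - real n"
    unfolding \<theta>_def using c1_pos by (simp add: field_simps power2_eq_square)
  also have "\<theta> - 1 - ?q = real (card G) / real c1 * (1 - real c2 / real c1)"
    unfolding \<theta>_def using c1_pos by (simp add: field_simps power2_eq_square)
  finally show ?thesis
    using rho_eq lambda_max_sqrt_diag_offdiag_le[OF _ p_nonneg] n2 by (simp add: \<theta>_def less_imp_le)
qed

end
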